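(* The problem of learning an unknown LPTS $U$ (up to strong simulation equivalence) is undecidable in the active learning framework with both the Friendly Teacher condition on the teacher and the minimum-state condition on the learner: there is no learner algorithm satisfying the minimum-state condition that, for every target LPTS $U$ and every teacher obeying the framework rules and the Friendly Teacher condition, after finitely many rounds conjectures a hypothesis $H$ with $H\simeq U$.
   Context: An LPTS is $\langle S,s^0,\alpha,\tau\rangle$ with finite state set $S$, start state $s^0$, finite action set $\alpha$, finite $\tau\subseteq S\times\alpha\times\mathrm{Dist}(S)$, where $\mathrm{Dist}(S)$ is the set of discrete probability distributions on $S$ (rational probabilities); write $s\xrightarrow{a}\mu$. A stochastic tree is an LPTS whose start state is in the support of no transition's distribution and every other state is in the support of exactly one transition's distribution. Strong simulation: for $R\subseteq S_1\times S_2$, $\mu_1\sqsubseteq_R\mu_2$ iff there is $w:S_1\times S_2\to\mathbb{Q}\cap[0,1]$ with $\sum_{s_2}w(s_1,s_2)=\mu_1(s_1)$, $\sum_{s_1}w(s_1,s_2)=\mu_2(s_2)$ and $w(s_1,s_2)>0\Rightarrow s_1Rs_2$; $R$ is a strong simulation iff $s_1Rs_2$ and $s_1\xrightarrow{a}\mu_1$ imply some $s_2\xrightarrow{a}\mu_2$ with $\mu_1\sqsubseteq_R\mu_2$; $L_1\preceq L_2$ iff a strong simulation relates the start states; $L_1\simeq L_2$ iff both $L_1\preceq L_2$ and $L_2\preceq L_1$. Active learning framework: unknown target LPTS $U$; in each round the learner conjectures a hypothesis $H$; the teacher checks $H\simeq U$ and, if it fails, returns either a negative counterexample (a tree $C$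 with $C\preceq H$, $C\not\preceq U$) or a positive one (a tree $C$ with $C\preceq U$, $C\not\preceq H$); letting $\mathcal{P}$, $\mathcal{N}$ be the sets of positive and negative counterexamples returned so far, there must always exist an LPTS consistent with them (an LPTS $L$ is consistent with $\mathcal{P},\mathcal{N}$ iff $P\preceq L$ for all $P\in\mathcal{P}$ and $N\not\preceq L$ for all $N\in\mathcal{N}$), and each conjecture must be consistent with the counterexamples received so far. An execution mapping from a tree $C$ to an LPTS $L$ is a total map $M:S_C\to S_L$ such that for every transition $c\xrightarrow{a}\mu_c$ of $C$ there is a transition $M(c)\xrightarrow{a}\mu$ of $L$ with $M$ injective on $\mathrm{supp}(\mu_c)$ and $\mu_c(c')=\mu(M(c'))$ for every $c'\in\mathrm{supp}(\mu_c)$. Friendly Teacher condition: every positive counterexample returned has an execution mapping to $U$, and every negative counterexample has an execution mapping to the current hypothesis $H$. Minimum-state condition on the learner: every hypothesis $H$ conjectured is an LPTS with the minimum number of states among all LPTSes consistent with the current $\mathcal{P}$ and $\mathcal{N}$. *)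

theory Defs
  imports Complex_Main
begin

text \<open>States are natural numbers,
actions have type 'a (instantiated with nat in the theorem, i.e. any countable
supply of action names).\<close>

record 'a lpts =
  states :: "nat set"
  start  :: nat
  acts   :: "'a set"
  trans  :: "(nat \<times> 'a \<times> (nat \<Rightarrow> rat)) set"

definition supp :: "(nat \<Rightarrow> rat) \<Rightarrow> nat set" where
  "supp \<mu> = {x. \<mu> x \<noteq> 0}"

definition is_dist :: "nat set \<Rightarrow> (nat \<Rightarrow> rat) \<Rightarrow> bool" where
  "is_dist S \<mu> \<longleftrightarrow> (\<forall>x. 0 \<le> \<mu> x) \<and> supp \<mu> \<subseteq> S \<and> sum \<mu> S = 1"

definition wf_lpts :: "'a lpts \<Rightarrow> bool" where
  "wf_lpts L \<longleftrightarrow> finite (states L) \<and> start L \<in> states L \<and> finite (acts L) \<and>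
     finite (trans L) \<and>
     (\<forall>(s, a, \<mu>) \<in> trans L. s \<in> states L \<and> a \<in> acts L \<and> is_dist (states L) \<mu>)"

definition lift_rel :: "nat set \<Rightarrow> nat set \<Rightarrow> (nat \<times> nat) set \<Rightarrow>
    (nat \<Rightarrow> rat) \<Rightarrow> (nat \<Rightarrow> rat) \<Rightarrow> bool" where
  "lift_rel S1 S2 R \<mu>1 \<mu>2 \<longleftrightarrow>
     (\<exists>w :: nat \<Rightarrow> nat \<Rightarrow> rat.
        (\<forall>x y. 0 \<le> w x y \<and> w x y \<le> 1) \<and>
        (\<forall>x\<in>S1. (\<Sum>y\<in>S2. w x y) = \<mu>1 x) \<and>
        (\<forall>y\<in>S2. (\<Sum>x\<in>S1. w x y) = \<mu>2 y) \<and>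
        (\<forall>x y. w x y > 0 \<longrightarrow> (x, y) \<in> R))"

definition strong_sim :: "'a lpts \<Rightarrow> 'a lpts \<Rightarrow> (nat \<times> nat) set \<Rightarrow> bool" where
  "strong_sim L1 L2 R \<longleftrightarrow> R \<subseteq> states L1 \<times> states L2 \<and>
     (\<forall>(s1, s2) \<in> R. \<forall>a \<mu>1. (s1, a, \<mu>1) \<in> trans L1 \<longrightarrow>
        (\<exists>\<mu>2. (s2, a, \<mu>2) \<in> trans L2 \<and> lift_rel (states L1) (states L2) R \<mu>1 \<mu>2))"

definition sim_preceq :: "'a lpts \<Rightarrow> 'a lpts \<Rightarrow> bool" (infix "\<preceq>\<^sub>s" 50) where
  "L1 \<preceq>\<^sub>s L2 \<longleftrightarrow> (\<exists>R. strong_sim L1 L2 R \<and> (start L1, start L2) \<in> R)"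

definition sim_equiv :: "'a lpts \<Rightarrow> 'a lpts \<Rightarrow> bool" (infix "\<simeq>\<^sub>s" 50) where
  "L1 \<simeq>\<^sub>s L2 \<longleftrightarrow> L1 \<preceq>\<^sub>s L2 \<and> L2 \<preceq>\<^sub>s L1"

definition stochastic_tree :: "'a lpts \<Rightarrow> bool" where
  "stochastic_tree C \<longleftrightarrow> wf_lpts C \<and>
     (\<forall>(s, a, \<mu>) \<in> trans C. start C \<notin> supp \<mu>) \<and>
     (\<forall>x \<in> states C - {start C}. \<exists>!t. t \<in> trans C \<and> x \<in> supp (snd (snd t)))"

definition exec_mapping :: "'a lpts \<Rightarrow> 'a lpts \<Rightarrow> (nat \<Rightarrow> nat) \<Rightarrow> bool" where
  "exec_mapping C L M \<longleftrightarrow> (\<forall>c \<in> states C. M c \<in> states L) \<and>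
     (\<forall>(c, a, \<mu>c) \<in> trans C. \<exists>\<mu>. (M c, a, \<mu>) \<in> trans L \<and> inj_on M (supp \<mu>c) \<and>
        (\<forall>c' \<in> supp \<mu>c. \<mu>c c' = \<mu> (M c')))"

text \<open>A history is the list of counterexamples returned so far; True = positive,
False = negative.\<close>
type_synonym 'a history = "(bool \<times> 'a lpts) list"

definition consistent :: "'a lpts \<Rightarrow> 'a history \<Rightarrow> bool" where
  "consistent L h \<longleftrightarrow> (\<forall>(pos, C) \<in> set h. if pos then C \<preceq>\<^sub>s L else \<not> C \<preceq>\<^sub>s L)"

text \<open>Minimum-state condition on a learner (a function from histories to hypotheses):
whenever some LPTS is consistent with the history (which the framework guarantees),
the conjecture is a consistent LPTS with the minimum number of states.\<close>
definition min_state_learner :: "('a history \<Rightarrow> 'a lpts) \<Rightarrow> bool" where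
  "min_state_learner learner \<longleftrightarrow>
     (\<forall>h. (\<exists>L. wf_lpts L \<and> consistent L h) \<longrightarrow>
        wf_lpts (learner h) \<and> consistent (learner h) h \<and>
        (\<forall>L. wf_lpts L \<and> consistent L h \<longrightarrow> card (states (learner h)) \<le> card (states L)))"

fun hist :: "('a history \<Rightarrow> 'a lpts) \<Rightarrow> ('a history \<Rightarrow> 'a lpts \<Rightarrow> bool \<times> 'a lpts)
              \<Rightarrow> nat \<Rightarrow> 'a history" where
  "hist learner teacher 0 = []"
| "hist learner teacher (Suc n) =
     hist learner teacher n @ [teacher (hist learner teacher n) (learner (hist learner teacher n))]"

text \<open>Validity of a teacher's answer (framework rules plus Friendly Teacher condition).\<close>
definition valid_answer :: "'a lpts \<Rightarrow> 'a lpts \<Rightarrow> 'a history \<Rightarrow> bool \<times> 'a lpts \<Rightarrow> bool" where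
  "valid_answer U H h ans \<longleftrightarrow>
     (case ans of (pos, C) \<Rightarrow>
        stochastic_tree C \<and>
        (if pos then C \<preceq>\<^sub>s U \<and> \<not> C \<preceq>\<^sub>s H \<and> (\<exists>M. exec_mapping C U M)
         else C \<preceq>\<^sub>s H \<and> \<not> C \<preceq>\<^sub>s U \<and> (\<exists>M. exec_mapping C H M))) \<and>
     (\<exists>L. wf_lpts L \<and> consistent L (h @ [ans]))"

definition friendly_teacher :: "'a lpts \<Rightarrow> ('a history \<Rightarrow> 'a lpts)
     \<Rightarrow> ('a history \<Rightarrow> 'a lpts \<Rightarrow> bool \<times> 'a lpts) \<Rightarrow> bool" where
  "friendly_teacher U learner teacher \<longleftrightarrow>
     (\<forall>n. (\<forall>m\<le>n. \<not> learner (hist learner teacher m) \<simeq>\<^sub>s U) \<longrightarrow>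
        valid_answer U (learner (hist learner teacher n)) (hist learner teacher n)
          (teacher (hist learner teacher n) (learner (hist learner teacher n))))"

end

theory Submission
  imports Defs
begin

text \<open>The teacher plays against the target U that performs action 0 and then reaches, with
probability 1/2 each, a state enabling action 1 or a deadlock. Every LPTS simulation
equivalent to U has at least three states, whereas each two-state system F_q, which moves
under action 0 to its action-1 state with probability q, simulates U as soon as q \<ge> 1/2.
The teacher keeps a nondegenerate interval of decoys F_q consistent with all counterexamples,
so a minimum-state learner never conjectures more than two states and never succeeds. If the
hypothesis H does not simulate U, then U itself is a positive counterexample; if the root of
H enables an action other than 0, that single transition is a negative one. Otherwise H
has two states, and unfolding H twice from its root gives a negative counterexample that
excludes F_q only for q the probability with which H reaches its action-1 state; the teacher
shrinks the interval to avoid that single value.\<close>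

section \<open>Distributions and strong simulation\<close>

lemma is_dist_nonneg: "is_dist S \<mu> \<Longrightarrow> 0 \<le> \<mu> x"
  by (simp add: is_dist_def)

lemma is_dist_le_1:
  assumes "is_dist S \<mu>" "finite S"
  shows "\<mu> x \<le> 1"
proof (cases "x \<in> S")
  case True
  then have "\<mu> x \<le> sum \<mu> S"
    using assms by (intro member_le_sum) (auto simp: is_dist_def)
  then show ?thesis
    using assms by (simp add: is_dist_def)
next
  case False
  then have "\<mu> x = 0"
    using assms(1) unfolding is_dist_def supp_def by blast
  then show ?thesis by simp
qed

lemma is_dist_sum_superset_supp:
  assumes "is_dist S \<mu>" "finite S" "supp \<mu> \<subseteq> T" "T \<subseteq> S"
  shows "sum \<mu> T = 1"
proof -
  have "sum \<mu> T = sum \<mu> S"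
    by (rule sum.mono_neutral_left) (use assms in \<open>auto simp: supp_def\<close>)
  then show ?thesis
    using assms by (simp add: is_dist_def)
qed

lemma is_distI:
  assumes "finite S" "\<forall>x. 0 \<le> \<mu> x" "supp \<mu> \<subseteq> S" "supp \<mu> \<subseteq> T" "finite T" "sum \<mu> T = 1"
  shows "is_dist S \<mu>"
proof -
  have "sum \<mu> S = sum \<mu> (supp \<mu>)"
    by (rule sum.mono_neutral_right) (use assms in \<open>auto simp: supp_def\<close>)
  also have "\<dots> = sum \<mu> T"
    by (rule sum.mono_neutral_left) (use assms in \<open>auto simp: supp_def\<close>)
  finally show ?thesis
    using assms by (simp add: is_dist_def)
qed

lemma wf_lpts_trans_dist: "wf_lpts L \<Longrightarrow> (s, a, \<mu>) \<in> trans L \<Longrightarrow> is_dist (states L) \<mu>"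
  by (auto simp: wf_lpts_def)

lemma stochastic_tree_imp_wf_lpts: "stochastic_tree C \<Longrightarrow> wf_lpts C"
  by (simp add: stochastic_tree_def)

lemma stochastic_treeI:
  assumes "wf_lpts C" "\<forall>(s, a, \<mu>) \<in> trans C. start C \<notin> supp \<mu>"
    "\<forall>x \<in> states C - {start C}. \<exists>t \<in> trans C. x \<in> supp (snd (snd t))"
    "\<forall>x t1 t2. t1 \<in> trans C \<longrightarrow> t2 \<in> trans C \<longrightarrow> x \<in> supp (snd (snd t1)) \<longrightarrow>
       x \<in> supp (snd (snd t2)) \<longrightarrow> t1 = t2"
  shows "stochastic_tree C"
  unfolding stochastic_tree_def using assms by metis

lemma consistent_snoc:
  "consistent L (h @ [(pos, C)]) \<longleftrightarrow> consistent L h \<and> (if pos then C \<preceq>\<^sub>s L else \<not> C \<preceq>\<^sub>s L)"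
  by (auto simp: consistent_def)

lemma lift_relE:
  assumes "lift_rel S1 S2 R \<mu>1 \<mu>2"
  obtains w where "\<forall>x y. 0 \<le> w x y \<and> w x y \<le> 1"
    "\<forall>x\<in>S1. (\<Sum>y\<in>S2. w x y) = \<mu>1 x" "\<forall>y\<in>S2. (\<Sum>x\<in>S1. w x y) = \<mu>2 y"
    "\<forall>x y. w x y > 0 \<longrightarrow> (x, y) \<in> R"
  using assms unfolding lift_rel_def by (metis that)

lemma lift_rel_converse: "lift_rel S1 S2 R \<mu>1 \<mu>2 \<Longrightarrow> lift_rel S2 S1 (R\<inverse>) \<mu>2 \<mu>1"
  unfolding lift_rel_def by (erule exE, rule_tac x = "\<lambda>y x. w x y" in exI) auto

lemma lift_rel_mass_le:
  assumes lift: "lift_rel S1 S2 R \<mu>1 \<mu>2" and fin: "finite S1" "finite S2" and A: "A \<subseteq> S1"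
    and B: "R `` A \<inter> S2 \<subseteq> B" "finite B" and nonneg: "\<forall>y. 0 \<le> \<mu>2 y"
  shows "sum \<mu>1 A \<le> sum \<mu>2 B"
proof -
  obtain w where w: "\<forall>x y. 0 \<le> w x y \<and> w x y \<le> 1"
    "\<forall>x\<in>S1. (\<Sum>y\<in>S2. w x y) = \<mu>1 x" "\<forall>y\<in>S2. (\<Sum>x\<in>S1. w x y) = \<mu>2 y"
    "\<forall>x y. w x y > 0 \<longrightarrow> (x, y) \<in> R"
    using lift by (rule lift_relE)
  define T where "T = R `` A \<inter> S2"
  have finA: "finite A" using A fin(1) by (rule finite_subset)
  have outside: "w x y = 0" if "x \<in> A" "y \<in> S2 - T" for x y
    using that w(1,4) by (force simp: T_def less_eq_rat_def)
  have "sum \<mu>1 A = (\<Sum>x\<in>A. \<Sum>y\<in>S2. w x y)"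
    using w(2) A by (intro sum.cong) auto
  also have "\<dots> = (\<Sum>x\<in>A. \<Sum>y\<in>T. w x y)"
    using outside fin(2) by (intro sum.cong refl sum.mono_neutral_right) (auto simp: T_def)
  also have "\<dots> = (\<Sum>y\<in>T. \<Sum>x\<in>A. w x y)"
    by (rule sum.swap)
  also have "\<dots> \<le> (\<Sum>y\<in>T. \<Sum>x\<in>S1. w x y)"
    using A fin(1) w(1) by (intro sum_mono sum_mono2) auto
  also have "\<dots> = sum \<mu>2 T"
    using w(3) by (auto simp: T_def intro: sum.cong)
  also have "\<dots> \<le> sum \<mu>2 B"
    using B nonneg by (intro sum_mono2) (auto simp: T_def)
  finally show ?thesis .
qed

lemma lift_rel_related:
  assumes "lift_rel S1 S2 R \<mu>1 \<mu>2" "finite S1" "finite S2" "x \<in> S1" "0 < \<mu>1 x" "\<forall>y. 0 \<le> \<mu>2 y"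
  obtains y where "y \<in> S2" "(x, y) \<in> R"
proof -
  have "\<mu>1 x \<le> sum \<mu>2 (R `` {x} \<inter> S2)"
    using lift_rel_mass_le[OF assms(1-3), of "{x}"] assms(2-6) by auto
  then have "R `` {x} \<inter> S2 \<noteq> {}"
    using assms(5) by auto
  then show ?thesis
    using that by blast
qed

definition enabled :: "'a lpts \<Rightarrow> nat \<Rightarrow> 'a \<Rightarrow> bool" where
  "enabled L s a \<longleftrightarrow> (\<exists>\<mu>. (s, a, \<mu>) \<in> trans L)"

lemma strong_simD:
  "strong_sim L1 L2 R \<Longrightarrow> (s1, s2) \<in> R \<Longrightarrow> (s1, a, \<mu>1) \<in> trans L1 \<Longrightarrow>
     \<exists>\<mu>2. (s2, a, \<mu>2) \<in> trans L2 \<and> lift_rel (states L1) (states L2) R \<mu>1 \<mu>2"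
  unfolding strong_sim_def by blast

lemma strong_sim_enabled:
  "strong_sim L1 L2 R \<Longrightarrow> (s1, s2) \<in> R \<Longrightarrow> enabled L1 s1 a \<Longrightarrow> enabled L2 s2 a"
  unfolding enabled_def by (blast dest: strong_simD)

lemma sim_preceq_enabled:
  "L1 \<preceq>\<^sub>s L2 \<Longrightarrow> enabled L1 (start L1) a \<Longrightarrow> enabled L2 (start L2) a"
  unfolding sim_preceq_def by (blast intro: strong_sim_enabled)

lemma mass_le_unique_enabled:
  assumes R: "strong_sim L1 L2 R" and lift: "lift_rel (states L1) (states L2) R \<mu>1 \<mu>2"
    and fin: "finite (states L1)" "finite (states L2)"
    and n: "n \<in> states L1" "enabled L1 n a"
    and unique: "\<forall>y\<in>states L2. enabled L2 y a \<longrightarrow> y = m" and nonneg: "\<forall>y. 0 \<le> \<mu>2 y"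
  shows "\<mu>1 n \<le> \<mu>2 m"
proof -
  have "R `` {n} \<inter> states L2 \<subseteq> {m}"
    using strong_sim_enabled[OF R _ n(2)] unique by blast
  from lift_rel_mass_le[OF lift fin _ this] n(1) nonneg show ?thesis by simp
qed

lemma lift_rel_graph:
  assumes d1: "is_dist S1 \<mu>1" and d2: "is_dist S2 \<mu>2" and fin1: "finite S1" and fin2: "finite S2"
    and M: "M ` S1 \<subseteq> S2" and inj: "inj_on M (supp \<mu>1)" and eq: "\<forall>c\<in>supp \<mu>1. \<mu>1 c = \<mu>2 (M c)"
  shows "lift_rel S1 S2 {(c, M c) | c. c \<in> S1} \<mu>1 \<mu>2"
proof -
  have suppC: "supp \<mu>1 \<subseteq> S1" using d1 by (simp add: is_dist_def)
  have img: "M ` supp \<mu>1 \<subseteq> S2" using M suppC by blast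
  have "sum \<mu>2 (M ` supp \<mu>1) = sum \<mu>1 (supp \<mu>1)"
    using inj eq by (simp add: sum.reindex)
  also have "\<dots> = 1" using is_dist_sum_superset_supp[OF d1 fin1 _ suppC] by simp
  finally have "sum \<mu>2 (M ` supp \<mu>1) = sum \<mu>2 S2"
    using d2 by (simp add: is_dist_def)
  then have "sum \<mu>2 (S2 - M ` supp \<mu>1) = 0"
    using fin2 img by (simp add: sum_diff)
  then have zero: "\<mu>2 y = 0" if "y \<in> S2" "y \<notin> M ` supp \<mu>1" for y
    using that fin2 is_dist_nonneg[OF d2] by (simp add: sum_nonneg_eq_0_iff)
  define w where "w = (\<lambda>u v. if u \<in> supp \<mu>1 \<and> v = M u then \<mu>1 u else 0)"
  have "\<forall>x y. 0 \<le> w x y \<and> w x y \<le> 1"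
    using is_dist_nonneg[OF d1] is_dist_le_1[OF d1 fin1] by (auto simp: w_def)
  moreover have "(\<Sum>y\<in>S2. w x y) = \<mu>1 x" if x: "x \<in> S1" for x
  proof -
    have "(\<Sum>y\<in>S2. w x y) = (\<Sum>y\<in>S2. if y = M x then (if x \<in> supp \<mu>1 then \<mu>1 x else 0) else 0)"
      by (rule sum.cong) (auto simp: w_def)
    also have "\<dots> = \<mu>1 x"
      using fin2 M x by (auto simp: supp_def)
    finally show ?thesis .
  qed
  moreover have "(\<Sum>x\<in>S1. w x y) = \<mu>2 y" if y: "y \<in> S2" for y
  proof (cases "y \<in> M ` supp \<mu>1")
    case True
    then obtain u where u: "u \<in> supp \<mu>1" "y = M u" by auto
    have "(\<Sum>x\<in>S1. w x y) = (\<Sum>x\<in>S1. if x = u then \<mu>1 u else 0)"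
      using u inj by (intro sum.cong) (auto simp: w_def inj_on_def)
    also have "\<dots> = \<mu>1 u" using u suppC fin1 by auto
    finally show ?thesis using u eq by simp
  next
    case False
    then have "(\<Sum>x\<in>S1. w x y) = 0"
      by (intro sum.neutral) (auto simp: w_def)
    then show ?thesis using zero[OF y False] by simp
  qed
  moreover have "\<forall>x y. w x y > 0 \<longrightarrow> (x, y) \<in> {(c, M c) | c. c \<in> S1}"
    using suppC by (auto simp: w_def split: if_splits)
  ultimately show ?thesis
    unfolding lift_rel_def by blast
qed

lemma exec_mapping_imp_sim_preceq:
  assumes wfC: "wf_lpts C" and wfL: "wf_lpts L" and ex: "exec_mapping C L M"
    and st: "M (start C) = start L"
  shows "C \<preceq>\<^sub>s L"
proof -
  define R where "R = {(c, M c) | c. c \<in> states C}"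
  have fin: "finite (states C)" "finite (states L)" and M: "M ` states C \<subseteq> states L"
    using wfC wfL ex by (auto simp: wf_lpts_def exec_mapping_def)
  have "\<exists>\<mu>2. (s2, a, \<mu>2) \<in> trans L \<and> lift_rel (states C) (states L) R \<mu>1 \<mu>2"
    if "(s1, s2) \<in> R" and t: "(s1, a, \<mu>1) \<in> trans C" for s1 s2 a \<mu>1
  proof -
    obtain \<mu> where \<mu>: "(M s1, a, \<mu>) \<in> trans L" and inj: "inj_on M (supp \<mu>1)"
      and eq: "\<forall>c\<in>supp \<mu>1. \<mu>1 c = \<mu> (M c)"
      using ex t unfolding exec_mapping_def by fastforce
    have "lift_rel (states C) (states L) R \<mu>1 \<mu>"
      unfolding R_def using wf_lpts_trans_dist[OF wfC t] wf_lpts_trans_dist[OF wfL \<mu>] fin M inj eq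
      by (rule lift_rel_graph)
    moreover have "s2 = M s1" using that by (auto simp: R_def)
    ultimately show ?thesis using \<mu> by blast
  qed
  moreover have "R \<subseteq> states C \<times> states L"
    using M by (auto simp: R_def)
  ultimately have "strong_sim C L R"
    unfolding strong_sim_def by blast
  moreover have "(start C, start L) \<in> R"
    using wfC st by (auto simp: R_def wf_lpts_def)
  ultimately show ?thesis
    unfolding sim_preceq_def by blast
qed

lemma exec_mapping_id: "wf_lpts L \<Longrightarrow> exec_mapping L L id"
  unfolding exec_mapping_def wf_lpts_def by auto

lemma sim_preceq_refl: "wf_lpts L \<Longrightarrow> L \<preceq>\<^sub>s L"
  using exec_mapping_imp_sim_preceq exec_mapping_id by fastforce

section \<open>The target and the two-state decoys\<close>

definition dirac :: "nat \<Rightarrow> nat \<Rightarrow> rat" where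
  "dirac k = (\<lambda>n. if n = k then 1 else 0)"

definition pair_dist :: "nat \<Rightarrow> nat \<Rightarrow> rat \<Rightarrow> rat \<Rightarrow> nat \<Rightarrow> rat" where
  "pair_dist i j p r = (\<lambda>n. if n = i then p else if n = j then r else 0)"

lemma supp_pair_dist:
  "i \<noteq> j \<Longrightarrow> supp (pair_dist i j p r) = (if p \<noteq> 0 then {i} else {}) \<union> (if r \<noteq> 0 then {j} else {})"
  by (auto simp: supp_def pair_dist_def)

lemma pair_dist_nonneg: "0 \<le> p \<Longrightarrow> 0 \<le> r \<Longrightarrow> 0 \<le> pair_dist i j p r n"
  by (simp add: pair_dist_def)

lemma is_dist_pair_dist:
  assumes "i \<noteq> j" "0 \<le> p" "0 \<le> r" "p + r = 1" "finite S" "supp (pair_dist i j p r) \<subseteq> S"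
  shows "is_dist S (pair_dist i j p r)"
  using assms by (intro is_distI[where T = "{i, j}"]) (auto simp: pair_dist_nonneg supp_def pair_dist_def)

definition target :: "nat lpts" where
  "target = \<lparr>states = {0, 1, 2, 3}, start = 0, acts = {0, 1},
     trans = {(0, 0, pair_dist 1 2 (1/2) (1/2)), (1, 1, dirac 3)}\<rparr>"

text \<open>Two-state systems simulating the target by merging its deadlock into the other
two states; for q \<ge> 1/2 the mass 1/2 of the deadlock can be split between them.\<close>
definition decoy :: "rat \<Rightarrow> nat lpts" where
  "decoy q = \<lparr>states = {0, 1}, start = 0, acts = {0, 1},
     trans = {(0, 0, pair_dist 0 1 (1 - q) q), (1, 1, dirac 1)}\<rparr>"

lemma target_simps [simp]: "states target = {0, 1, 2, 3}" "start target = 0"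
  by (simp_all add: target_def)

lemma decoy_simps [simp]: "states (decoy q) = {0, 1}" "start (decoy q) = 0"
  by (simp_all add: decoy_def)

lemma trans_target:
  "(s, a, \<mu>) \<in> trans target \<longleftrightarrow>
     (s = 0 \<and> a = 0 \<and> \<mu> = pair_dist 1 2 (1/2) (1/2)) \<or> (s = 1 \<and> a = 1 \<and> \<mu> = dirac 3)"
  by (auto simp: target_def)

lemma trans_decoy:
  "(s, a, \<mu>) \<in> trans (decoy q) \<longleftrightarrow>
     (s = 0 \<and> a = 0 \<and> \<mu> = pair_dist 0 1 (1 - q) q) \<or> (s = 1 \<and> a = 1 \<and> \<mu> = dirac 1)"
  by (auto simp: decoy_def)

lemma enabled_target: "enabled target s a \<longleftrightarrow> (s = 0 \<and> a = 0) \<or> (s = 1 \<and> a = 1)"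
  by (auto simp: enabled_def trans_target)

lemma enabled_decoy: "enabled (decoy q) s a \<longleftrightarrow> (s = 0 \<and> a = 0) \<or> (s = 1 \<and> a = 1)"
  by (auto simp: enabled_def trans_decoy)

lemma wf_target: "wf_lpts target"
  by (auto simp: wf_lpts_def target_def is_dist_def supp_def pair_dist_def dirac_def)

lemma stochastic_tree_target: "stochastic_tree target"
  unfolding stochastic_tree_def using wf_target
  by (auto simp: target_def supp_def pair_dist_def dirac_def)

lemma wf_decoy: "0 \<le> q \<Longrightarrow> q \<le> 1 \<Longrightarrow> wf_lpts (decoy q)"
  by (auto simp: wf_lpts_def decoy_def is_dist_def supp_def pair_dist_def dirac_def)

lemma target_sim_preceq_decoy:
  assumes "1/2 \<le> q" "q \<le> 1"
  shows "target \<preceq>\<^sub>s decoy q"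
proof -
  define R :: "(nat \<times> nat) set" where "R = {(0, 0), (1, 1), (2, 0), (2, 1), (3, 0), (3, 1)}"
  have "lift_rel {0, 1, 2, 3} {0, 1} R (pair_dist 1 2 (1/2) (1/2)) (pair_dist 0 1 (1 - q) q)"
    unfolding lift_rel_def
    by (rule exI[of _ "\<lambda>u v. if (u, v) = (1, 1) then 1/2 else if (u, v) = (2, 1) then q - 1/2
                           else if (u, v) = (2, 0) then 1 - q else 0"])
      (use assms in \<open>auto simp: pair_dist_def R_def split: if_splits\<close>)
  moreover have "lift_rel {0, 1, 2, 3} {0, 1} R (dirac 3) (dirac 1)"
    unfolding lift_rel_def
    by (rule exI[of _ "\<lambda>u v. if (u, v) = (3, 1) then 1 else 0"]) (auto simp: dirac_def R_def)
  ultimately have "strong_sim target (decoy q) R"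
    unfolding strong_sim_def by (auto simp: R_def trans_target trans_decoy)
  then show ?thesis
    unfolding sim_preceq_def by (auto simp: R_def)
qed

lemma target_sim_preceqE:
  assumes wf: "wf_lpts L" and le: "target \<preceq>\<^sub>s L"
  obtains \<mu> z where "(start L, 0, \<mu>) \<in> trans L" "z \<in> states L" "enabled L z 1"
proof -
  obtain R where R: "strong_sim target L R" "(0, start L) \<in> R"
    using le by (auto simp: sim_preceq_def)
  obtain \<mu> where \<mu>: "(start L, 0, \<mu>) \<in> trans L"
    and lift: "lift_rel {0, 1, 2, 3} (states L) R (pair_dist 1 2 (1/2) (1/2)) \<mu>"
    using strong_simD[OF R] trans_target by fastforce
  have "\<forall>y. 0 \<le> \<mu> y"
    using wf_lpts_trans_dist[OF wf \<mu>] by (simp add: is_dist_def)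
  then obtain z where z: "z \<in> states L" "(1, z) \<in> R"
    using wf by (auto simp: wf_lpts_def pair_dist_def intro: lift_rel_related[OF lift, of 1])
  have "enabled L z 1"
    using strong_sim_enabled[OF R(1) z(2)] by (simp add: enabled_target)
  with \<mu> z(1) show ?thesis using that by blast
qed

lemma card_states_ge_3_if_sim_equiv_target:
  assumes wf: "wf_lpts L" and eq: "L \<simeq>\<^sub>s target"
  shows "3 \<le> card (states L)"
proof -
  have "target \<preceq>\<^sub>s L" using eq by (simp add: sim_equiv_def)
  with wf obtain \<mu> z where \<mu>: "(start L, 0, \<mu>) \<in> trans L" and z: "z \<in> states L" "enabled L z 1"
    by (rule target_sim_preceqE)
  obtain R where R: "strong_sim L target R" "(start L, 0) \<in> R"
    using eq by (auto simp: sim_equiv_def sim_preceq_def)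
  have "lift_rel (states L) {0, 1, 2, 3} R \<mu> (pair_dist 1 2 (1/2) (1/2))"
    using strong_simD[OF R \<mu>] by (auto simp: trans_target)
  then obtain d where d: "d \<in> states L" "(2, d) \<in> R\<inverse>"
    by (rule lift_rel_related[OF lift_rel_converse, of _ _ _ _ _ 2])
      (use wf_lpts_trans_dist[OF wf \<mu>] wf in \<open>auto simp: wf_lpts_def is_dist_def pair_dist_def\<close>)
  have dead: "\<not> enabled L d a" for a
    using strong_sim_enabled[OF R(1)] d(2) by (force simp: enabled_target)
  have "start L \<noteq> z"
    using strong_sim_enabled[OF R] z(2) by (auto simp: enabled_target)
  moreover have "d \<noteq> start L" "d \<noteq> z"
    using dead \<mu> z(2) by (auto simp: enabled_def)
  ultimately have "card {start L, z, d} = 3" by auto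
  moreover have "{start L, z, d} \<subseteq> states L"
    using wf z d by (auto simp: wf_lpts_def)
  ultimately show ?thesis
    using wf by (metis card_mono wf_lpts_def)
qed

section \<open>Counterexample trees\<close>

definition shift_dist :: "(nat \<Rightarrow> rat) \<Rightarrow> nat \<Rightarrow> rat" where
  "shift_dist \<nu> n = (case n of 0 \<Rightarrow> 0 | Suc m \<Rightarrow> \<nu> m)"

definition step_tree :: "'a \<Rightarrow> (nat \<Rightarrow> rat) \<Rightarrow> 'a lpts" where
  "step_tree a \<nu> = \<lparr>states = insert 0 (Suc ` supp \<nu>), start = 0, acts = {a},
     trans = {(0, a, shift_dist \<nu>)}\<rparr>"

lemma supp_shift_dist: "supp (shift_dist \<nu>) = Suc ` supp \<nu>"
  by (auto simp: supp_def shift_dist_def image_iff gr0_conv_Suc split: nat.splits)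

lemma step_tree_simps [simp]:
  "states (step_tree a \<nu>) = insert 0 (Suc ` supp \<nu>)" "start (step_tree a \<nu>) = 0"
  "trans (step_tree a \<nu>) = {(0, a, shift_dist \<nu>)}" "acts (step_tree a \<nu>) = {a}"
  by (simp_all add: step_tree_def)

lemma stochastic_tree_step_tree:
  assumes d: "is_dist S \<nu>" and fin: "finite S"
  shows "stochastic_tree (step_tree a \<nu>)"
proof -
  have sub: "supp \<nu> \<subseteq> S" using d by (simp add: is_dist_def)
  have finS: "finite (supp \<nu>)" using sub fin by (rule finite_subset)
  have "sum (shift_dist \<nu>) (Suc ` supp \<nu>) = sum \<nu> (supp \<nu>)"
    by (simp add: sum.reindex shift_dist_def)
  also have "\<dots> = 1" using is_dist_sum_superset_supp[OF d fin _ sub] by simp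
  finally have "is_dist (insert 0 (Suc ` supp \<nu>)) (shift_dist \<nu>)"
    by (intro is_distI[where T = "Suc ` supp \<nu>"])
      (use finS is_dist_nonneg[OF d] in \<open>auto simp: supp_shift_dist shift_dist_def split: nat.splits\<close>)
  then have "wf_lpts (step_tree a \<nu>)"
    unfolding wf_lpts_def using finS by simp
  then show ?thesis
    by (rule stochastic_treeI) (auto simp: supp_shift_dist)
qed

lemma exec_mapping_step_tree:
  assumes wf: "wf_lpts H" and t: "(s, a, \<nu>) \<in> trans H"
  shows "exec_mapping (step_tree a \<nu>) H (\<lambda>n. if n = 0 then s else n - 1)"
proof -
  have "s \<in> states H" "supp \<nu> \<subseteq> states H"
    using wf t by (auto simp: wf_lpts_def is_dist_def)
  then show ?thesis
    unfolding exec_mapping_def using t by (auto simp: supp_shift_dist shift_dist_def inj_on_def)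
qed

lemma not_step_tree_sim_preceq: "\<not> enabled L (start L) a \<Longrightarrow> \<not> step_tree a \<nu> \<preceq>\<^sub>s L"
  using sim_preceq_enabled[of "step_tree a \<nu>" L a] by (auto simp: enabled_def)

text \<open>The unfolding to depth two of a hypothesis with states x, z and transitions
x -0-> (x: p, z: r) and z -1-> (x: s, z: t); states 1, 3, 5 are copies of x and
2, 4, 6 copies of z. Only states of positive probability are kept.\<close>
definition two_level_tree :: "rat \<Rightarrow> rat \<Rightarrow> rat \<Rightarrow> rat \<Rightarrow> nat lpts" where
  "two_level_tree p r s t = \<lparr>
     states = {0} \<union> supp (pair_dist 1 2 p r) \<union> (if p \<noteq> 0 then supp (pair_dist 3 4 p r) else {})
       \<union> (if r \<noteq> 0 then supp (pair_dist 5 6 s t) else {}),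
     start = 0, acts = {0, 1},
     trans = {(0, 0, pair_dist 1 2 p r)} \<union> (if p \<noteq> 0 then {(1, 0, pair_dist 3 4 p r)} else {})
       \<union> (if r \<noteq> 0 then {(2, 1, pair_dist 5 6 s t)} else {})\<rparr>"

lemma two_level_tree_simps [simp]:
  "start (two_level_tree p r s t) = 0" "acts (two_level_tree p r s t) = {0, 1}"
  by (simp_all add: two_level_tree_def)

lemma trans_two_level_tree:
  "(n, a, \<mu>) \<in> trans (two_level_tree p r s t) \<longleftrightarrow>
     (n = 0 \<and> a = 0 \<and> \<mu> = pair_dist 1 2 p r) \<or> (p \<noteq> 0 \<and> n = 1 \<and> a = 0 \<and> \<mu> = pair_dist 3 4 p r)
     \<or> (r \<noteq> 0 \<and> n = 2 \<and> a = 1 \<and> \<mu> = pair_dist 5 6 s t)"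
  by (auto simp: two_level_tree_def)

lemma enabled_two_level_tree:
  "enabled (two_level_tree p r s t) n a \<longleftrightarrow>
     (n = 0 \<and> a = 0) \<or> (p \<noteq> 0 \<and> n = 1 \<and> a = 0) \<or> (r \<noteq> 0 \<and> n = 2 \<and> a = 1)"
  by (auto simp: enabled_def trans_two_level_tree)

lemma states_two_level_tree:
  "states (two_level_tree p r s t) \<subseteq> {0, 1, 2, 3, 4, 5, 6}"
  "1 \<in> states (two_level_tree p r s t) \<longleftrightarrow> p \<noteq> 0"
  "2 \<in> states (two_level_tree p r s t) \<longleftrightarrow> r \<noteq> 0"
  by (auto simp: two_level_tree_def supp_pair_dist split: if_splits)

lemma finite_states_two_level_tree: "finite (states (two_level_tree p r s t))"
  using states_two_level_tree(1) by (rule finite_subset) simp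

lemma stochastic_tree_two_level_tree:
  assumes "0 \<le> p" "0 \<le> r" "0 \<le> s" "0 \<le> t" "p + r = 1" "s + t = 1"
  shows "stochastic_tree (two_level_tree p r s t)"
proof -
  let ?N = "two_level_tree p r s t"
  have "wf_lpts ?N"
    unfolding wf_lpts_def
  proof (intro conjI ballI finite_states_two_level_tree)
    fix tr assume "tr \<in> trans ?N"
    then show "case tr of (n, a, \<mu>) \<Rightarrow> n \<in> states ?N \<and> a \<in> acts ?N \<and> is_dist (states ?N) \<mu>"
      using assms finite_states_two_level_tree states_two_level_tree(2,3)
      by (auto simp: trans_two_level_tree intro!: is_dist_pair_dist) (auto simp: two_level_tree_def)
  qed (auto simp: two_level_tree_def)
  then show ?thesis
    by (rule stochastic_treeI) (auto simp: two_level_tree_def supp_pair_dist split: if_splits)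
qed

lemma exec_mapping_two_level_tree:
  assumes \<mu>: "(x, 0, \<mu>) \<in> trans H" and \<nu>: "(z, 1, \<nu>) \<in> trans H" and "x \<noteq> z"
    and "x \<in> states H" "z \<in> states H"
  shows "exec_mapping (two_level_tree (\<mu> x) (\<mu> z) (\<nu> x) (\<nu> z)) H
           (\<lambda>n. if even n \<and> n \<noteq> 0 then z else x)"
    (is "exec_mapping _ H ?M")
proof -
  have copies: "inj_on ?M (supp (pair_dist i j (\<rho> x) (\<rho> z))) \<and>
      (\<forall>c\<in>supp (pair_dist i j (\<rho> x) (\<rho> z)). pair_dist i j (\<rho> x) (\<rho> z) c = \<rho> (?M c))"
    if "?M i = x" "?M j = z" for i j and \<rho> :: "nat \<Rightarrow> rat"
    using that \<open>x \<noteq> z\<close> by (auto simp: inj_on_def supp_def pair_dist_def split: if_splits)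
  have "\<exists>\<mu>'. (?M n, a, \<mu>') \<in> trans H \<and> inj_on ?M (supp \<mu>c) \<and> (\<forall>c\<in>supp \<mu>c. \<mu>c c = \<mu>' (?M c))"
    if "(n, a, \<mu>c) \<in> trans (two_level_tree (\<mu> x) (\<mu> z) (\<nu> x) (\<nu> z))" for n a \<mu>c
    using that unfolding trans_two_level_tree
  proof (elim disjE conjE)
    assume "n = 0" "a = 0" "\<mu>c = pair_dist 1 2 (\<mu> x) (\<mu> z)"
    then show ?thesis using copies[of 1 2 \<mu>] \<mu> by (intro exI[of _ \<mu>]) simp
  next
    assume "n = 1" "a = 0" "\<mu>c = pair_dist 3 4 (\<mu> x) (\<mu> z)"
    then show ?thesis using copies[of 3 4 \<mu>] \<mu> by (intro exI[of _ \<mu>]) simp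
  next
    assume "n = 2" "a = 1" "\<mu>c = pair_dist 5 6 (\<nu> x) (\<nu> z)"
    then show ?thesis using copies[of 5 6 \<nu>] \<nu> by (intro exI[of _ \<nu>]) simp
  qed
  moreover have "?M n \<in> states H" for n
    using assms by simp
  ultimately show ?thesis
    unfolding exec_mapping_def by fast
qed

lemma not_two_level_tree_sim_preceq_target:
  assumes "0 \<le> p" "0 \<le> r" "p + r = 1"
  shows "\<not> two_level_tree p r s t \<preceq>\<^sub>s target"
proof
  let ?N = "two_level_tree p r s t"
  assume "?N \<preceq>\<^sub>s target"
  then obtain R where R: "strong_sim ?N target R" "(0, 0) \<in> R"
    by (auto simp: sim_preceq_def)
  have lift: "lift_rel (states ?N) (states target) R (pair_dist 1 2 p r) (pair_dist 1 2 (1/2) (1/2))"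
    using strong_simD[OF R, of 0 "pair_dist 1 2 p r"] by (auto simp: trans_two_level_tree trans_target)
  note mass = mass_le_unique_enabled[OF R(1) lift finite_states_two_level_tree]
  have "p \<le> 0"
  proof (cases "p = 0")
    case False
    then show ?thesis
      using mass[of 1 0 0] states_two_level_tree(2)
      by (simp add: enabled_two_level_tree enabled_target pair_dist_def)
  qed simp
  moreover have "r \<le> 1/2"
  proof (cases "r = 0")
    case False
    then show ?thesis
      using mass[of 2 1 1] states_two_level_tree(3)
      by (simp add: enabled_two_level_tree enabled_target pair_dist_def)
  qed simp
  ultimately show False
    using assms by simp
qed

lemma two_level_tree_sim_preceq_decoy_imp:
  assumes "0 \<le> p" "0 \<le> r" "p + r = 1" "0 \<le> q" "q \<le> 1"
    and le: "two_level_tree p r s t \<preceq>\<^sub>s decoy q"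
  shows "q = r"
proof -
  let ?N = "two_level_tree p r s t"
  obtain R where R: "strong_sim ?N (decoy q) R" "(0, 0) \<in> R"
    using le by (auto simp: sim_preceq_def)
  have lift: "lift_rel (states ?N) (states (decoy q)) R (pair_dist 1 2 p r) (pair_dist 0 1 (1 - q) q)"
    using strong_simD[OF R, of 0 "pair_dist 1 2 p r"] by (auto simp: trans_two_level_tree trans_decoy)
  have "r \<le> q"
  proof (cases "r = 0")
    case False
    then show ?thesis
      using mass_le_unique_enabled[OF R(1) lift finite_states_two_level_tree, of 2 1 1]
        states_two_level_tree(3) assms
      by (simp add: enabled_two_level_tree enabled_decoy pair_dist_def)
  qed (use assms in simp)
  moreover have "q \<le> r"
  proof -
    have "(1, 1) \<notin> R"
      using strong_sim_enabled[OF R(1), of 1 1 0] R(1) states_two_level_tree(2)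
      by (auto simp: enabled_two_level_tree enabled_decoy strong_sim_def)
    then have "R\<inverse> `` {1} \<inter> states ?N \<subseteq> {0, 2, 3, 4, 5, 6}"
      using states_two_level_tree(1) by blast
    from lift_rel_mass_le[OF lift_rel_converse[OF lift] _ finite_states_two_level_tree _ this]
    show ?thesis
      using assms by (simp add: pair_dist_def)
  qed
  ultimately show ?thesis by simp
qed

section \<open>The adversarial teacher\<close>

lemma friendly_teacher_from_invariant:
  assumes init: "I []"
    and answer: "\<And>h. I h \<Longrightarrow> \<exists>ans. valid_answer U (learner h) h ans \<and> I (h @ [ans])"
  shows "\<exists>teacher. friendly_teacher U learner teacher \<and> (\<forall>n. I (hist learner teacher n))"
proof -
  define teacher where "teacher = (\<lambda>h H. SOME ans. valid_answer U H h ans \<and> I (h @ [ans]))"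
  have good: "valid_answer U (learner h) h (teacher h (learner h)) \<and> I (h @ [teacher h (learner h)])"
    if "I h" for h
    unfolding teacher_def using answer[OF that] by (rule someI_ex)
  have inv: "I (hist learner teacher n)" for n
    by (induction n) (simp_all add: init good)
  then have "friendly_teacher U learner teacher"
    unfolding friendly_teacher_def using good by blast
  with inv show ?thesis by blast
qed

lemma min_state_learner_card_le:
  assumes "min_state_learner learner" "wf_lpts L" "consistent L h"
  shows "wf_lpts (learner h) \<and> card (states (learner h)) \<le> card (states L)"
  using assms unfolding min_state_learner_def by blast

lemma exists_subinterval_avoiding:
  fixes a b v :: "'a :: linordered_field"
  assumes "a < b"
  obtains a' b' where "a \<le> a'" "a' < b'" "b' \<le> b" "v \<notin> {a'..b'}"
proof (cases "v \<le> (a + b) / 2")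
  case True
  show ?thesis
    by (rule that[of "(a + 3 * b) / 4" b]) (use True assms in \<open>auto simp: field_simps\<close>)
next
  case False
  show ?thesis
    by (rule that[of a "(a + b) / 2"]) (use False assms in \<open>auto simp: field_simps\<close>)
qed

definition decoy_interval :: "rat \<Rightarrow> rat \<Rightarrow> nat history \<Rightarrow> bool" where
  "decoy_interval a b h \<longleftrightarrow> 1/2 \<le> a \<and> a < b \<and> b \<le> 1 \<and> (\<forall>q\<in>{a..b}. consistent (decoy q) h)"

lemma decoy_interval_Nil: "decoy_interval (1/2) 1 []"
  by (simp add: decoy_interval_def consistent_def)

lemma decoy_interval_consistent: "decoy_interval a b h \<Longrightarrow> wf_lpts (decoy a) \<and> consistent (decoy a) h"
  by (auto simp: decoy_interval_def intro: wf_decoy)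

lemma valid_answer_decoy_interval:
  assumes ab: "decoy_interval a b h" and tree: "stochastic_tree C"
    and answer: "if pos then C \<preceq>\<^sub>s target \<and> \<not> C \<preceq>\<^sub>s H \<and> (\<exists>M. exec_mapping C target M)
                 else C \<preceq>\<^sub>s H \<and> \<not> C \<preceq>\<^sub>s target \<and> (\<exists>M. exec_mapping C H M)"
    and sub: "a \<le> a'" "a' < b'" "b' \<le> b"
    and decoys: "\<forall>q\<in>{a'..b'}. if pos then C \<preceq>\<^sub>s decoy q else \<not> C \<preceq>\<^sub>s decoy q"
  shows "valid_answer target H h (pos, C) \<and> decoy_interval a' b' (h @ [(pos, C)])"
proof -
  have "decoy_interval a' b' (h @ [(pos, C)])"
    using ab sub decoys by (auto simp: decoy_interval_def consistent_snoc)
  with tree answer show ?thesis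
    unfolding valid_answer_def by (blast dest: decoy_interval_consistent)
qed

lemma positive_answer:
  assumes "decoy_interval a b h" "\<not> target \<preceq>\<^sub>s H"
  shows "valid_answer target H h (True, target) \<and> decoy_interval a b (h @ [(True, target)])"
proof -
  have "\<exists>M. exec_mapping target target M"
    using exec_mapping_id[OF wf_target] by blast
  with assms show ?thesis
    by (intro valid_answer_decoy_interval[OF _ stochastic_tree_target])
      (auto simp: sim_preceq_refl[OF wf_target] decoy_interval_def intro: target_sim_preceq_decoy)
qed

lemma step_tree_answer:
  assumes ab: "decoy_interval a b h" and wf: "wf_lpts H"
    and t: "(start H, c, \<nu>) \<in> trans H" and c: "c \<noteq> 0"
  shows "valid_answer target H h (False, step_tree c \<nu>) \<and>
    decoy_interval a b (h @ [(False, step_tree c \<nu>)])"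
proof -
  have tree: "stochastic_tree (step_tree c \<nu>)"
    using wf_lpts_trans_dist[OF wf t] wf by (auto simp: wf_lpts_def intro: stochastic_tree_step_tree)
  have ex: "exec_mapping (step_tree c \<nu>) H (\<lambda>n. if n = 0 then start H else n - 1)"
    using wf t by (rule exec_mapping_step_tree)
  have "step_tree c \<nu> \<preceq>\<^sub>s H"
    using exec_mapping_imp_sim_preceq[OF stochastic_tree_imp_wf_lpts[OF tree] wf ex] by simp
  with ab tree ex c show ?thesis
    by (intro valid_answer_decoy_interval)
      (auto simp: decoy_interval_def enabled_target enabled_decoy intro!: not_step_tree_sim_preceq)
qed

lemma two_state_hypothesisE:
  assumes wf: "wf_lpts H" and card: "card (states H) \<le> 2" and le: "target \<preceq>\<^sub>s H"
    and root: "\<forall>c. enabled H (start H) c \<longrightarrow> c = 0"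
  obtains \<mu> z \<nu> where "(start H, 0, \<mu>) \<in> trans H" "(z, 1, \<nu>) \<in> trans H"
    "start H \<noteq> z" "states H = {start H, z}"
proof -
  obtain \<mu> z where \<mu>: "(start H, 0, \<mu>) \<in> trans H" and z: "z \<in> states H" "enabled H z 1"
    using wf le by (rule target_sim_preceqE)
  obtain \<nu> where \<nu>: "(z, 1, \<nu>) \<in> trans H"
    using z(2) by (auto simp: enabled_def)
  have xz: "start H \<noteq> z" using root z(2) by auto
  have "states H = {start H, z}"
    using wf card xz z(1) by (intro card_seteq[symmetric]) (auto simp: wf_lpts_def)
  with \<mu> \<nu> xz show ?thesis using that by blast
qed

lemma two_level_tree_answer:
  assumes ab: "decoy_interval a b h" and wf: "wf_lpts H" and card: "card (states H) \<le> 2"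
    and le: "target \<preceq>\<^sub>s H" and root: "\<forall>c. enabled H (start H) c \<longrightarrow> c = 0"
  shows "\<exists>ans a' b'. valid_answer target H h ans \<and> decoy_interval a' b' (h @ [ans])"
proof -
  let ?x = "start H"
  obtain \<mu> z \<nu> where \<mu>: "(?x, 0, \<mu>) \<in> trans H" and \<nu>: "(z, 1, \<nu>) \<in> trans H"
    and xz: "?x \<noteq> z" and states: "states H = {?x, z}"
    using wf card le root by (rule two_state_hypothesisE)
  have d\<mu>: "is_dist (states H) \<mu>" and d\<nu>: "is_dist (states H) \<nu>"
    using wf \<mu> \<nu> by (auto intro: wf_lpts_trans_dist)
  have sums: "\<mu> ?x + \<mu> z = 1" "\<nu> ?x + \<nu> z = 1"
    using d\<mu> d\<nu> xz unfolding states is_dist_def by simp_all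
  have nonneg: "0 \<le> \<mu> ?x" "0 \<le> \<mu> z" "0 \<le> \<nu> ?x" "0 \<le> \<nu> z"
    using d\<mu> d\<nu> by (simp_all add: is_dist_nonneg)
  let ?N = "two_level_tree (\<mu> ?x) (\<mu> z) (\<nu> ?x) (\<nu> z)"
  have tree: "stochastic_tree ?N"
    using nonneg sums by (rule stochastic_tree_two_level_tree)
  have ex: "exec_mapping ?N H (\<lambda>n. if even n \<and> n \<noteq> 0 then z else ?x)"
    using \<mu> \<nu> xz by (rule exec_mapping_two_level_tree) (simp_all add: states)
  have "a < b" using ab by (simp add: decoy_interval_def)
  then obtain a' b' where sub: "a \<le> a'" "a' < b'" "b' \<le> b" "\<mu> z \<notin> {a'..b'}"
    by (rule exists_subinterval_avoiding)
  have "?N \<preceq>\<^sub>s H"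
    using exec_mapping_imp_sim_preceq[OF stochastic_tree_imp_wf_lpts[OF tree] wf ex] by simp
  moreover have "\<not> ?N \<preceq>\<^sub>s target"
    using nonneg sums by (intro not_two_level_tree_sim_preceq_target) simp_all
  moreover have "\<not> ?N \<preceq>\<^sub>s decoy q" if q: "q \<in> {a'..b'}" for q
  proof
    assume sim: "?N \<preceq>\<^sub>s decoy q"
    have "0 \<le> q" "q \<le> 1"
      using q sub ab by (auto simp: decoy_interval_def)
    then have "q = \<mu> z"
      using sim by (rule two_level_tree_sim_preceq_decoy_imp[OF nonneg(1,2) sums(1)])
    with q sub(4) show False by simp
  qed
  ultimately have "valid_answer target H h (False, ?N) \<and> decoy_interval a' b' (h @ [(False, ?N)])"
    using ex sub by (intro valid_answer_decoy_interval[OF ab tree]) auto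
  then show ?thesis by blast
qed

lemma teacher_answer:
  assumes "decoy_interval a b h" "wf_lpts H" "card (states H) \<le> 2"
  shows "\<exists>ans a' b'. valid_answer target H h ans \<and> decoy_interval a' b' (h @ [ans])"
proof (cases "target \<preceq>\<^sub>s H")
  case False
  then show ?thesis using positive_answer[OF assms(1)] by blast
next
  case True
  show ?thesis
  proof (cases "\<forall>c. enabled H (start H) c \<longrightarrow> c = 0")
    case False
    then obtain c \<nu> where "(start H, c, \<nu>) \<in> trans H" "c \<noteq> 0"
      by (auto simp: enabled_def)
    then show ?thesis using step_tree_answer[OF assms(1,2)] by blast
  qed (use two_level_tree_answer[OF assms True] in blast)
qed

theorem theorem6:
  shows "\<not> (\<exists>learner :: nat history \<Rightarrow> nat lpts.
             min_state_learner learner \<and>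
             (\<forall>U teacher. wf_lpts U \<and> friendly_teacher U learner teacher \<longrightarrow>
                (\<exists>n. learner (hist learner teacher n) \<simeq>\<^sub>s U)))"
proof
  assume "\<exists>learner :: nat history \<Rightarrow> nat lpts.
             min_state_learner learner \<and>
             (\<forall>U teacher. wf_lpts U \<and> friendly_teacher U learner teacher \<longrightarrow>
                (\<exists>n. learner (hist learner teacher n) \<simeq>\<^sub>s U))"
  then obtain learner :: "nat history \<Rightarrow> nat lpts" where ms: "min_state_learner learner"
    and learns: "\<And>U teacher. wf_lpts U \<Longrightarrow> friendly_teacher U learner teacher \<Longrightarrow>
                   \<exists>n. learner (hist learner teacher n) \<simeq>\<^sub>s U"
    by blast
  let ?I = "\<lambda>h. \<exists>a b. decoy_interval a b h"
  have small: "wf_lpts (learner h) \<and> card (states (learner h)) \<le> 2" if "?I h" for h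
    using that min_state_learner_card_le[OF ms] decoy_interval_consistent by fastforce
  have init: "?I []" using decoy_interval_Nil by blast
  have answer: "\<exists>ans. valid_answer target (learner h) h ans \<and> ?I (h @ [ans])" if "?I h" for h
    using that small teacher_answer by meson
  obtain teacher where friendly: "friendly_teacher target learner teacher"
    and inv: "\<And>n. ?I (hist learner teacher n)"
    using friendly_teacher_from_invariant[of ?I, OF init answer] by blast
  obtain n where "learner (hist learner teacher n) \<simeq>\<^sub>s target"
    using learns[OF wf_target friendly] by blast
  then show False
    using card_states_ge_3_if_sim_equiv_target small[OF inv[of n]] by fastforce
qed

end
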